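(* Let $q$ be a prime power, $t\ge1$, $s<t$ a nonnegative integer, and $W=\{0,w_1,\dots,w_{q^s-1}\}$ an $\mathbb{F}_q$-subspace of $\mathbb{F}_{q^t}$ of dimension $s$. Let $\alpha^*\in\mathbb{F}_{q^t}$, let $\{\beta_1,\dots,\beta_t\}$ be an arbitrary $\mathbb{F}_q$-basis of $\mathbb{F}_{q^t}$, and for $i=1,\dots,t$ let \[ g_i(x)=\beta_i\prod_{j=1}^{q^s-1}\Big(x-\big(\alpha^*-w_j^{-1}\beta_i\big)\Big). \] Then $\{g_1(\alpha^* ),\dots,g_t(\alpha^* )\}$ has rank $t$ over $\mathbb{F}_q$. *)

theory Defs
  imports "HOL-Computational_Algebra.Polynomial" "HOL-Computational_Algebra.Primes"
begin

text \<open>A subfield F of a field 'a (playing the role of F_q inside F_(q^t)).\<close>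
definition is_subfield :: "'a::field set \<Rightarrow> bool" where
  "is_subfield F \<longleftrightarrow> 0 \<in> F \<and> 1 \<in> F \<and>
     (\<forall>x\<in>F. \<forall>y\<in>F. x + y \<in> F \<and> x - y \<in> F \<and> x * y \<in> F) \<and>
     (\<forall>x\<in>F. inverse x \<in> F)"

definition F_span :: "'a::field set \<Rightarrow> 'a set \<Rightarrow> 'a set" where
  "F_span F B = {(\<Sum>x\<in>B. c x * x) | c. \<forall>x\<in>B. c x \<in> F}"

definition F_indep :: "'a::field set \<Rightarrow> 'a set \<Rightarrow> bool" where
  "F_indep F B \<longleftrightarrow> finite B \<and>
     (\<forall>c. (\<forall>x\<in>B. c x \<in> F) \<longrightarrow> (\<Sum>x\<in>B. c x * x) = 0 \<longrightarrow> (\<forall>x\<in>B. c x = 0))"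

definition F_subspace :: "'a::field set \<Rightarrow> 'a set \<Rightarrow> bool" where
  "F_subspace F W \<longleftrightarrow> 0 \<in> W \<and> (\<forall>x\<in>W. \<forall>y\<in>W. x + y \<in> W) \<and> (\<forall>c\<in>F. \<forall>x\<in>W. c * x \<in> W)"

definition F_basis :: "'a::field set \<Rightarrow> 'a set \<Rightarrow> 'a set \<Rightarrow> bool" where
  "F_basis F B W \<longleftrightarrow> B \<subseteq> W \<and> F_indep F B \<and> F_span F B = W"

definition F_rank :: "'a::field set \<Rightarrow> 'a set \<Rightarrow> nat" where
  "F_rank F S = Max {card B | B. B \<subseteq> S \<and> F_indep F B}"

definition prime_power :: "nat \<Rightarrow> bool" where
  "prime_power q \<longleftrightarrow> (\<exists>p k. prime p \<and> k > 0 \<and> q = p ^ k)"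

end

theory Submission
  imports Defs "HOL-Library.FuncSet"
begin

text \<open>
  Every value \<open>g\<^sub>i(\<alpha>\<^sup>*)\<close> equals \<open>C \<beta>\<^sub>i\<^sup>N\<close> with \<open>N = |W| = q\<^sup>s\<close> and
  \<open>C = \<Prod>\<^sub>j w\<^sub>j\<^sup>-\<^sup>1 \<noteq> 0\<close>, independently of \<open>\<alpha>\<^sup>*\<close>. Since \<open>N\<close> is a power of the
  characteristic, \<open>x \<mapsto> C x\<^sup>N\<close> is an injective additive map, and it is
  \<open>\<bbbF>\<^sub>q\<close>-linear because \<open>c\<^sup>N = c\<close> for \<open>c \<in> \<bbbF>\<^sub>q\<close>. Hence it maps the basis
  \<open>\<beta>\<^sub>1, \<dots>, \<beta>\<^sub>t\<close> to \<open>t\<close> distinct independent vectors.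
\<close>

lemma of_nat_card_subfield:
  fixes F :: "'a::{field,finite} set"
  assumes "is_subfield F"
  shows "of_nat (card F) = (0::'a)"
proof -
  have closed: "x + 1 \<in> F" "x - 1 \<in> F" if "x \<in> F" for x
    using assms that unfolding is_subfield_def by blast+
  have "(\<Sum>x\<in>F. x + 1) = (\<Sum>x\<in>F. x)"
    by (rule sum.reindex_bij_witness[of _ "\<lambda>x. x - 1" "\<lambda>x. x + 1"]) (auto simp: closed)
  then show ?thesis
    by (simp add: sum.distrib)
qed

lemma prime_CHAR_finite_field: "prime CHAR('a::{field,finite})"
  using prime_CHAR_semidom finite_imp_CHAR_pos[OF finite_UNIV] by blast

lemma card_subfield_eq_CHAR_power:
  fixes F :: "'a::{field,finite} set"
  assumes "is_subfield F" "prime_power (card F)"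
  obtains k where "card F = CHAR('a) ^ k"
proof -
  obtain p k where "prime p" "card F = p ^ k"
    using assms(2) unfolding prime_power_def by blast
  moreover have "CHAR('a) dvd p ^ k"
    using of_nat_card_subfield[OF assms(1)] \<open>card F = p ^ k\<close> of_nat_eq_0_iff_char_dvd by metis
  ultimately have "CHAR('a) = p"
    using prime_CHAR_finite_field prime_dvd_power primes_dvd_imp_eq by blast
  then show ?thesis
    using that \<open>card F = p ^ k\<close> by blast
qed

lemma subfield_power_card_eq_same:
  fixes F :: "'a::{field,finite} set"
  assumes "is_subfield F" "a \<in> F"
  shows "a ^ card F = a"
proof (cases "a = 0")
  case True
  have "card F > 0"
    using assms(1) unfolding is_subfield_def by (auto simp: card_gt_0_iff)
  then show ?thesis
    using True by simp
next
  case False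
  have closed: "a * x \<in> F" "inverse a * x \<in> F" if "x \<in> F" for x
    using assms that unfolding is_subfield_def by blast+
  have zero: "0 \<in> F"
    using assms(1) unfolding is_subfield_def by blast
  have "(\<Prod>x\<in>F - {0}. a * x) = (\<Prod>x\<in>F - {0}. x)"
    by (rule prod.reindex_bij_witness[of _ "\<lambda>x. inverse a * x" "\<lambda>x. a * x"])
       (use False in \<open>auto simp: closed\<close>)
  then have "a ^ (card F - 1) = 1"
    using zero by (simp add: prod.distrib)
  moreover have "card F > 0"
    using zero by (auto simp: card_gt_0_iff)
  ultimately show ?thesis
    by (metis Suc_diff_1 mult.right_neutral power_Suc)
qed

lemma subfield_power_card_power_eq_same:
  fixes F :: "'a::{field,finite} set"
  assumes "is_subfield F" "a \<in> F"
  shows "a ^ (card F ^ n) = a"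
proof (induction n)
  case (Suc n)
  have "a ^ (card F ^ Suc n) = (a ^ (card F ^ n)) ^ card F"
    by (simp add: power_mult[symmetric] mult.commute)
  then show ?case
    using Suc subfield_power_card_eq_same[OF assms] by simp
qed simp

lemma card_eq_power_if_F_basis:
  fixes F B W :: "'a::{field,finite} set"
  assumes "F_basis F B W" "is_subfield F"
  shows "card W = card F ^ card B"
proof -
  have indep: "F_indep F B" and span: "F_span F B = W"
    using assms(1) unfolding F_basis_def by auto
  define comb where "comb c = (\<Sum>x\<in>B. c x * x)" for c :: "'a \<Rightarrow> 'a"
  have "inj_on comb (B \<rightarrow>\<^sub>E F)"
  proof (rule inj_onI)
    fix c d assume c: "c \<in> B \<rightarrow>\<^sub>E F" and d: "d \<in> B \<rightarrow>\<^sub>E F" and "comb c = comb d"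
    then have "(\<Sum>x\<in>B. (c x - d x) * x) = 0"
      unfolding comb_def by (simp add: sum_subtractf left_diff_distrib)
    moreover have "\<forall>x\<in>B. c x - d x \<in> F"
      using c d assms(2) unfolding is_subfield_def by auto
    ultimately have "\<forall>x\<in>B. c x - d x = 0"
      using indep spec[of _ "\<lambda>x. c x - d x"] unfolding F_indep_def by blast
    then show "c = d"
      using c d by (auto intro: PiE_ext)
  qed
  moreover have "comb ` (B \<rightarrow>\<^sub>E F) = W"
  proof
    show "comb ` (B \<rightarrow>\<^sub>E F) \<subseteq> W"
      using span unfolding F_span_def comb_def by auto
    show "W \<subseteq> comb ` (B \<rightarrow>\<^sub>E F)"
    proof
      fix y assume "y \<in> W"
      then obtain c where c: "\<forall>x\<in>B. c x \<in> F" and y: "y = (\<Sum>x\<in>B. c x * x)"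
        using span unfolding F_span_def by auto
      have "restrict c B \<in> B \<rightarrow>\<^sub>E F"
        using c by auto
      moreover have "comb (restrict c B) = y"
        unfolding comb_def y by (rule sum.cong) auto
      ultimately show "y \<in> comb ` (B \<rightarrow>\<^sub>E F)"
        by blast
    qed
  qed
  ultimately have "card W = card (B \<rightarrow>\<^sub>E F)"
    by (metis bij_betw_def bij_betw_same_card)
  then show ?thesis
    by (simp add: card_PiE)
qed

lemma F_rank_eq_card_if_F_indep:
  assumes "F_indep F S"
  shows "F_rank F S = card S"
  unfolding F_rank_def
proof (rule Max_eqI)
  have finite_S: "finite S"
    using assms unfolding F_indep_def by blast
  then have "{card B | B. B \<subseteq> S \<and> F_indep F B} \<subseteq> {..card S}"
    using card_mono by fastforce
  then show "finite {card B | B. B \<subseteq> S \<and> F_indep F B}"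
    using finite_subset by blast
  show "y \<le> card S" if "y \<in> {card B | B. B \<subseteq> S \<and> F_indep F B}" for y
    using that finite_S card_mono by fastforce
  show "card S \<in> {card B | B. B \<subseteq> S \<and> F_indep F B}"
    using assms by blast
qed

lemma F_indep_image_linear:
  fixes f :: "'a::field \<Rightarrow> 'a"
  assumes add: "\<And>x y. f (x + y) = f x + f y"
    and scale: "\<And>c x. c \<in> F \<Longrightarrow> f (c * x) = c * f x"
    and "inj f" and indep: "F_indep F B"
  shows "F_indep F (f ` B)"
  unfolding F_indep_def
proof (intro conjI allI impI)
  have finite_B: "finite B"
    using indep unfolding F_indep_def by blast
  then show "finite (f ` B)" by simp
  have f_zero: "f 0 = 0"
    using add[of 0 0] by (metis add.right_neutral add_left_cancel)
  have f_sum: "f (\<Sum>x\<in>A. h x) = (\<Sum>x\<in>A. f (h x))" if "finite A" for A and h :: "'a \<Rightarrow> 'a"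
    using that by (induction A rule: finite_induct) (simp_all add: f_zero add)
  fix c assume coeffs: "\<forall>y\<in>f ` B. c y \<in> F" and "(\<Sum>y\<in>f ` B. c y * y) = 0"
  moreover have "(\<Sum>y\<in>f ` B. c y * y) = f (\<Sum>x\<in>B. c (f x) * x)"
    using coeffs \<open>inj f\<close> finite_B
    by (simp add: sum.reindex inj_on_subset[OF \<open>inj f\<close>] f_sum scale)
  ultimately have "(\<Sum>x\<in>B. c (f x) * x) = 0"
    using \<open>inj f\<close> f_zero by (metis injD)
  then have "\<forall>x\<in>B. c (f x) = 0"
    using indep coeffs unfolding F_indep_def by auto
  then show "\<forall>y\<in>f ` B. c y = 0" by blast
qed

lemma inj_power_CHAR_power:
  fixes C :: "'a::field"
  assumes "prime CHAR('a)" "N = CHAR('a) ^ n" "C \<noteq> 0"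
  shows "inj (\<lambda>x. C * x ^ N)"
proof (rule injI)
  fix x y :: 'a
  assume "C * x ^ N = C * y ^ N"
  then have "(x - y) ^ N + y ^ N = y ^ N"
    using assms freshmans_dream'[of N n "x - y" y] by simp
  then show "x = y" by simp
qed

lemma F_indep_image_scaled_power:
  fixes C :: "'a::field"
  assumes "prime CHAR('a)" "N = CHAR('a) ^ n"
    and fixes_F: "\<And>c. c \<in> F \<Longrightarrow> c ^ N = c"
    and "C \<noteq> 0" "F_indep F B"
  shows "F_indep F ((\<lambda>x. C * x ^ N) ` B)"
proof (rule F_indep_image_linear[OF _ _ inj_power_CHAR_power[OF assms(1,2,4)] assms(5)])
  show "C * (x + y) ^ N = C * x ^ N + C * y ^ N" for x y
    unfolding freshmans_dream'[OF assms(1,2)] by (simp add: distrib_left)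
  show "C * (c * x) ^ N = c * (C * x ^ N)" if "c \<in> F" for c x
    using fixes_F[OF that] by (simp add: power_mult_distrib)
qed

lemma poly_smult_prod_linear_factors:
  fixes a b :: "'a::field"
  assumes "finite V"
  shows "poly (smult b (\<Prod>w\<in>V. [:- (a - inverse w * b), 1:])) a
           = (\<Prod>w\<in>V. inverse w) * b ^ Suc (card V)"
  using assms by (simp add: poly_prod prod.distrib)

theorem lemma4:
  fixes F W :: "'a::{field,finite} set"
    and q t s :: nat
    and alpha :: 'a
    and beta :: "nat \<Rightarrow> 'a"
    and g :: "nat \<Rightarrow> 'a poly"
  assumes "prime_power q"
    and "is_subfield F" and "card F = q"
    and "card (UNIV :: 'a set) = q ^ t"
    and "t \<ge> 1" and "s < t"
    and "F_subspace F W" and "\<exists>B. F_basis F B W \<and> card B = s"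
    and "inj_on beta {1..t}" and "F_basis F (beta ` {1..t}) UNIV"
    and "\<And>i. i \<in> {1..t} \<Longrightarrow>
           g i = smult (beta i) (\<Prod>w\<in>W - {0}. [:- (alpha - inverse w * beta i), 1:])"
  shows "F_rank F ((\<lambda>i. poly (g i) alpha) ` {1..t}) = t"
proof -
  obtain k where "card F = CHAR('a) ^ k"
    using card_subfield_eq_CHAR_power assms(1-3) by blast
  obtain B where "F_basis F B W" "card B = s"
    using assms(8) by blast
  then have "card W = card F ^ s"
    using card_eq_power_if_F_basis[OF _ assms(2)] by blast
  have "0 \<in> W"
    using assms(7) unfolding F_subspace_def by blast
  define C where "C = (\<Prod>w\<in>W - {0}. inverse w)"
  define \<phi> where "\<phi> x = C * x ^ card W" for x :: 'a
  have "poly (g i) alpha = \<phi> (beta i)" if "i \<in> {1..t}" for i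
    using assms(11)[OF that] poly_smult_prod_linear_factors[of "W - {0}"]
      card_Suc_Diff1[OF finite \<open>0 \<in> W\<close>] unfolding \<phi>_def C_def by simp
  then have g_values: "(\<lambda>i. poly (g i) alpha) ` {1..t} = \<phi> ` beta ` {1..t}"
    by (simp add: image_image)
  have char_power: "card W = CHAR('a) ^ (k * s)"
    using \<open>card F = CHAR('a) ^ k\<close> \<open>card W = card F ^ s\<close> by (simp add: power_mult)
  have "C \<noteq> 0"
    by (simp add: C_def)
  have "F_indep F (\<phi> ` beta ` {1..t})"
    unfolding \<phi>_def
  proof (rule F_indep_image_scaled_power[OF prime_CHAR_finite_field char_power _ \<open>C \<noteq> 0\<close>])
    show "c ^ card W = c" if "c \<in> F" for c
      using subfield_power_card_power_eq_same[OF assms(2) that] \<open>card W = card F ^ s\<close> by simp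
    show "F_indep F (beta ` {1..t})"
      using assms(10) unfolding F_basis_def by blast
  qed
  moreover have "card (\<phi> ` beta ` {1..t}) = t"
    using inj_power_CHAR_power[OF prime_CHAR_finite_field char_power \<open>C \<noteq> 0\<close>] assms(9)
    unfolding \<phi>_def by (simp add: card_image inj_on_subset)
  ultimately show ?thesis
    unfolding g_values by (simp add: F_rank_eq_card_if_F_indep)
qed

end
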